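(* For every $r\geq 1$ there exists a polynomial $p_r$ of degree at most $2r-2$ such that for all $k\geq 3$, $$M(k;r)\leq \frac{k^{2r-1}}{(2r-1)!}+p_r(k).$$
   Context: A sequence of positive integers $w_1<\dots<w_n$ is an ascending wave if $w_{i+1}-w_i \geq w_i-w_{i-1}$ for $2\le i\le n-1$. $AW(k;r)$ is the least $N$ such that every $r$-coloring of $\{1,\dots,N\}$ contains a $k$-term monochromatic ascending wave. For $k\ge 2$ and $M\ge AW(k;r)$: for an $r$-coloring $\psi$ of $\{1,\dots,M\}$, $\delta_k(\psi)$ is the minimum of $w_k-w_{k-1}$ over all monochromatic $k$-term ascending waves $(w_1,\dots,w_k)$ under $\psi$, and $\Delta^M(k;r)$ is the maximum of $\delta_k(\psi)$ over all $r$-colorings $\psi$ of $\{1,\dots,M\}$. The integers $M(k;r)$ are defined by $M(k;1)=k$, $M(1;r)=1$, $M(2;r)=r+1$, and for $k\ge3$, $r\ge2$, $M(k;r)=M(k-1;r)+\Delta^{M(k-1;r)}(k-1;r)+M(k;r-1)-1$; one has $M(k;r)\ge AW(k;r)$ so these quantities are defined. *)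

theory Defs
  imports Complex_Main "HOL-Computational_Algebra.Polynomial"
begin

text \<open>A finite sequence of positive integers, given as a list w = [w_1,...,w_n]
  (list index i corresponds to w_(i+1)), is an ascending wave if it is strictly increasing
  and consecutive differences are non-decreasing.\<close>
definition ascending_wave :: "nat list \<Rightarrow> bool" where
  "ascending_wave w \<longleftrightarrow>
     (\<forall>x\<in>set w. 0 < x) \<and> sorted_wrt (<) w \<and>
     (\<forall>i. 1 \<le> i \<and> i + 1 < length w \<longrightarrow> w ! (i+1) - w ! i \<ge> w ! i - w ! (i - 1))"

text \<open>An r-coloring of {1..N}: colours are 0..r-1 (values outside {1..N} are irrelevant).\<close>
definition coloring :: "(nat \<Rightarrow> nat) \<Rightarrow> nat \<Rightarrow> nat \<Rightarrow> bool" where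
  "coloring \<psi> N r \<longleftrightarrow> (\<forall>x\<in>{1..N}. \<psi> x < r)"

definition mono_wave :: "(nat \<Rightarrow> nat) \<Rightarrow> nat \<Rightarrow> nat list \<Rightarrow> bool" where
  "mono_wave \<psi> N w \<longleftrightarrow> ascending_wave w \<and> set w \<subseteq> {1..N} \<and>
     (\<forall>x\<in>set w. \<forall>y\<in>set w. \<psi> x = \<psi> y)"

definition AW :: "nat \<Rightarrow> nat \<Rightarrow> nat" where
  "AW k r = (LEAST N. \<forall>\<psi>. coloring \<psi> N r \<longrightarrow> (\<exists>w. length w = k \<and> mono_wave \<psi> N w))"

definition delta :: "nat \<Rightarrow> (nat \<Rightarrow> nat) \<Rightarrow> nat \<Rightarrow> nat" where
  "delta k \<psi> M = Min {w ! (k-1) - w ! (k-2) | w. length w = k \<and> mono_wave \<psi> M w}"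

definition Delta :: "nat \<Rightarrow> nat \<Rightarrow> nat \<Rightarrow> nat" where
  "Delta M k r = Max {delta k \<psi> M | \<psi>. coloring \<psi> M r}"

text \<open>M(k;r) for k, r \<ge> 1 (value 0 is a junk value for k = 0 or r = 0).\<close>
function Mkr :: "nat \<Rightarrow> nat \<Rightarrow> nat" where
  "Mkr k r =
     (if k = 0 \<or> r = 0 then 0
      else if r = 1 then k
      else if k = 1 then 1
      else if k = 2 then r + 1
      else Mkr (k-1) r + Delta (Mkr (k-1) r) (k-1) r + Mkr k (r-1) - 1)"
  by pat_completeness auto
termination by (relation "measure (\<lambda>(k,r). k + r)") auto

end

theory Submission
  imports Defs
begin

text \<open>
  For A = M(k-1;r),
  d = \<Delta>^A(k-1;r) and B = M(k;r-1), colour {1..A+d+B-1} and take a wave in {1..A} with last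
  gap at most d, ending in L. Either the colour of L reappears in [L+d, L+d+B-1], which extends
  the wave, or this window of length B avoids that colour and so contains a wave by induction
  on r. Hence M(k;r) \<ge> AW(k;r), and the last gaps, and thereby \<Delta>, obey the same recursion
  as M up to a maximum. By Pascal's rule, induction on r then bounds M(k;r) by a binomial
  coefficient (k+c) choose (2r-1), which is at most (k+c)^(2r-1)/(2r-1)!, a polynomial in k
  with leading term k^(2r-1)/(2r-1)!.
\<close>

declare Mkr.simps[simp del]

lemma Mkr_one: "k \<ge> 1 \<Longrightarrow> Mkr k 1 = k"
  by (subst Mkr.simps) simp

lemma Mkr_two: "r \<ge> 1 \<Longrightarrow> Mkr 2 r = r + 1"
  by (subst Mkr.simps) simp

lemma Mkr_Suc_Suc:
  "k \<ge> 2 \<Longrightarrow> r \<ge> 1 \<Longrightarrow>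
   Mkr (Suc k) (Suc r) = Mkr k (Suc r) + Delta (Mkr k (Suc r)) k (Suc r) + Mkr (Suc k) r - 1"
  using Mkr.simps[of "Suc k" "Suc r"] by simp

lemma ascending_wave_shift: "ascending_wave w \<Longrightarrow> ascending_wave (map (\<lambda>x. x + s) w)"
  unfolding ascending_wave_def by (auto simp: sorted_wrt_map)

lemma ascending_wave_snoc:
  assumes "ascending_wave w" "length w = k" "k \<ge> 2"
    and "w ! (k-1) + (w ! (k-1) - w ! (k-2)) \<le> x"
  shows "ascending_wave (w @ [x])"
proof -
  have sorted: "sorted_wrt (<) w"
    using assms(1) unfolding ascending_wave_def by blast
  then have "w ! (k-2) < w ! (k-1)"
    using assms(2,3) by (simp add: sorted_wrt_nth_less)
  then have last_less: "w ! (k-1) < x"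
    using assms(4) by linarith
  have below_x: "\<forall>y\<in>set w. y < x"
  proof
    fix y assume "y \<in> set w"
    then obtain i where "i < k" "w ! i = y"
      using assms(2) by (auto simp: in_set_conv_nth)
    then have "y \<le> w ! (k-1)"
      using sorted assms(2) by (cases "i = k - 1") (auto simp: sorted_wrt_nth_less less_imp_le)
    then show "y < x" using last_less by simp
  qed
  have gaps: "\<forall>i. 1 \<le> i \<and> i + 1 < length (w @ [x]) \<longrightarrow>
      (w @ [x]) ! (i+1) - (w @ [x]) ! i \<ge> (w @ [x]) ! i - (w @ [x]) ! (i-1)"
  proof (intro allI impI)
    fix i assume that: "1 \<le> i \<and> i + 1 < length (w @ [x])"
    show "(w @ [x]) ! (i+1) - (w @ [x]) ! i \<ge> (w @ [x]) ! i - (w @ [x]) ! (i-1)"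
    proof (cases "i + 1 < k")
      case True
      then show ?thesis
        using assms(1,2) that unfolding ascending_wave_def by (simp add: nth_append)
    next
      case False
      then have "i = k - 1" using that assms(2) by auto
      then show ?thesis using assms(2-4) by (simp add: nth_append numeral_2_eq_2) arith
    qed
  qed
  have "sorted_wrt (<) (w @ [x])"
    using sorted below_x by (simp add: sorted_wrt_append)
  moreover have "\<forall>y\<in>set (w @ [x]). 0 < y"
    using assms(1) last_less unfolding ascending_wave_def by auto
  ultimately show ?thesis
    using gaps unfolding ascending_wave_def by blast
qed

lemma mono_wave_mono: "mono_wave \<psi> N w \<Longrightarrow> N \<le> N' \<Longrightarrow> mono_wave \<psi> N' w"
  unfolding mono_wave_def by (meson atLeastatMost_subset_iff order_refl order_trans)

lemma mono_wave_shift: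
  assumes "mono_wave (\<lambda>x. \<psi> (x + s)) N w"
  shows "mono_wave \<psi> (s + N) (map (\<lambda>x. x + s) w)"
proof -
  have "ascending_wave w" and range: "set w \<subseteq> {1..N}"
    and mono: "\<forall>x\<in>set w. \<forall>y\<in>set w. \<psi> (x + s) = \<psi> (y + s)"
    using assms unfolding mono_wave_def by blast+
  moreover have "set (map (\<lambda>x. x + s) w) \<subseteq> {1..s + N}"
    using range by force
  moreover have "\<forall>x\<in>set (map (\<lambda>x. x + s) w). \<forall>y\<in>set (map (\<lambda>x. x + s) w). \<psi> x = \<psi> y"
    using mono by (simp only: set_map) blast
  ultimately show ?thesis
    unfolding mono_wave_def using ascending_wave_shift by blast
qed

lemma mono_wave_snoc:
  assumes "mono_wave \<psi> N w" "length w = k" "k \<ge> 2"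
    and "w ! (k-1) + (w ! (k-1) - w ! (k-2)) \<le> x" "x \<le> N" "\<psi> x = \<psi> (w ! (k-1))"
  shows "mono_wave \<psi> N (w @ [x])"
proof -
  have wave: "ascending_wave w" and range: "set w \<subseteq> {1..N}"
    and mono: "\<forall>y\<in>set w. \<forall>z\<in>set w. \<psi> y = \<psi> z"
    using assms(1) unfolding mono_wave_def by blast+
  have last: "w ! (k-1) \<in> set w"
    using assms(2,3) by simp
  then have "1 \<le> x"
    using range assms(4) by auto
  then have "set (w @ [x]) \<subseteq> {1..N}"
    using range assms(5) by simp
  moreover have "\<psi> y = \<psi> (w ! (k-1))" if "y \<in> set (w @ [x])" for y
  proof (cases "y = x")
    case True
    then show ?thesis using assms(6) by simp
  next
    case False
    then have "y \<in> set w" using that by simp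
    then show ?thesis using mono last by blast
  qed
  ultimately show ?thesis
    using ascending_wave_snoc[OF wave assms(2-4)] unfolding mono_wave_def by metis
qed

text \<open>Where this holds with r \<ge> 1, the Min in delta and the Max in Delta range over finite
  nonempty sets, so that the recursion for M is meaningful.\<close>
definition wave_gap_bound :: "nat \<Rightarrow> nat \<Rightarrow> nat \<Rightarrow> nat \<Rightarrow> bool" where
  "wave_gap_bound N k r g \<longleftrightarrow>
     (\<forall>\<psi>. coloring \<psi> N r \<longrightarrow> (\<exists>w. length w = k \<and> mono_wave \<psi> N w \<and> w ! (k-1) - w ! (k-2) \<le> g))"

lemma wave_gap_bound_mono: "wave_gap_bound N k r g \<Longrightarrow> g \<le> g' \<Longrightarrow> wave_gap_bound N k r g'"
  unfolding wave_gap_bound_def by (meson le_trans)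

lemma wave_gap_bound_one_colour:
  assumes "2 \<le> k" "k \<le> N"
  shows "wave_gap_bound N k 1 1"
  unfolding wave_gap_bound_def
proof (intro allI impI)
  fix \<psi> assume col: "coloring \<psi> N 1"
  define w where "w = map Suc [0..<k]"
  have "ascending_wave w"
    unfolding ascending_wave_def w_def by (auto simp: sorted_wrt_map)
  moreover have range: "set w \<subseteq> {1..N}"
    using assms(2) by (auto simp: w_def)
  moreover have "\<psi> x = 0" if "x \<in> set w" for x
    using col range that unfolding coloring_def by blast
  ultimately have "mono_wave \<psi> N w"
    unfolding mono_wave_def by simp
  moreover have "w ! (k-1) - w ! (k-2) = 1"
    using assms(1) by (simp add: w_def)
  ultimately show "\<exists>w. length w = k \<and> mono_wave \<psi> N w \<and> w ! (k-1) - w ! (k-2) \<le> 1"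
    by (intro exI[of _ w]) (simp add: w_def)
qed

lemma wave_gap_bound_two: "wave_gap_bound (r + 1) 2 r r"
  unfolding wave_gap_bound_def
proof (intro allI impI)
  fix \<psi> assume col: "coloring \<psi> (r + 1) r"
  have "\<psi> ` {1..r+1} \<subseteq> {..<r}"
    using col unfolding coloring_def by auto
  then have "card (\<psi> ` {1..r+1}) \<le> r"
    by (metis card_lessThan card_mono finite_lessThan)
  then have "\<not> inj_on \<psi> {1..r+1}"
    by (intro pigeonhole) simp
  then obtain x y where xy: "x \<in> {1..r+1}" "y \<in> {1..r+1}" "x < y" "\<psi> x = \<psi> y"
    unfolding inj_on_def by (metis linorder_neqE_nat)
  then have "mono_wave \<psi> (r + 1) [x, y]"
    unfolding mono_wave_def ascending_wave_def by auto
  moreover have "y - x \<le> r"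
    using xy by auto
  ultimately show "\<exists>w. length w = 2 \<and> mono_wave \<psi> (r + 1) w \<and> w ! (2-1) - w ! (2-2) \<le> r"
    by (intro exI[of _ "[x, y]"]) simp
qed

lemma finite_wave_gaps:
  assumes "k \<ge> 2"
  shows "finite {w ! (k-1) - w ! (k-2) | w. length w = k \<and> mono_wave \<psi> N w}"
proof (rule finite_subset)
  show "{w ! (k-1) - w ! (k-2) | w. length w = k \<and> mono_wave \<psi> N w} \<subseteq> {..N}"
  proof
    fix x assume "x \<in> {w ! (k-1) - w ! (k-2) | w. length w = k \<and> mono_wave \<psi> N w}"
    then obtain w where w: "x = w ! (k-1) - w ! (k-2)" "length w = k" "mono_wave \<psi> N w"
      by blast
    have "w ! (k-1) \<in> set w"
      using assms w(2) by simp
    moreover have "set w \<subseteq> {1..N}"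
      using w(3) unfolding mono_wave_def by blast
    ultimately have "w ! (k-1) \<le> N"
      by (meson atLeastAtMost_iff subsetD)
    then show "x \<in> {..N}"
      using w(1) by simp
  qed
qed simp

lemma delta_le_gap:
  "k \<ge> 2 \<Longrightarrow> length w = k \<Longrightarrow> mono_wave \<psi> N w \<Longrightarrow> delta k \<psi> N \<le> w ! (k-1) - w ! (k-2)"
  unfolding delta_def by (rule Min_le[OF finite_wave_gaps]) blast+

lemma delta_attained:
  assumes "k \<ge> 2" "length w = k" "mono_wave \<psi> N w"
  shows "\<exists>v. length v = k \<and> mono_wave \<psi> N v \<and> v ! (k-1) - v ! (k-2) = delta k \<psi> N"
proof -
  have "delta k \<psi> N \<in> {w ! (k-1) - w ! (k-2) | w. length w = k \<and> mono_wave \<psi> N w}"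
    unfolding delta_def using assms by (intro Min_in finite_wave_gaps) blast+
  then show ?thesis
    by (auto simp del: One_nat_def)
qed

lemma delta_le_of_wave_gap_bound:
  assumes "wave_gap_bound N k r g" "k \<ge> 2" "coloring \<psi> N r"
  shows "delta k \<psi> N \<le> g"
proof -
  obtain w where w: "length w = k" "mono_wave \<psi> N w" "w ! (k-1) - w ! (k-2) \<le> g"
    using assms(1,3) unfolding wave_gap_bound_def by blast
  have "delta k \<psi> N \<le> w ! (k-1) - w ! (k-2)"
    using delta_le_gap[OF assms(2) w(1,2)] .
  then show ?thesis
    using w(3) by linarith
qed

lemma finite_deltas:
  assumes "wave_gap_bound N k r g" "k \<ge> 2"
  shows "finite {delta k \<psi> N | \<psi>. coloring \<psi> N r}"
  by (rule finite_subset[of _ "{..g}"]) (use assms delta_le_of_wave_gap_bound in auto)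

lemma Delta_le:
  assumes "wave_gap_bound N k r g" "k \<ge> 2" "r \<ge> 1"
  shows "Delta N k r \<le> g"
proof -
  have "coloring (\<lambda>_. 0) N r"
    using assms(3) unfolding coloring_def by simp
  then have "{delta k \<psi> N | \<psi>. coloring \<psi> N r} \<noteq> {}"
    by blast
  then show ?thesis
    unfolding Delta_def
    using assms finite_deltas delta_le_of_wave_gap_bound by (intro Max.boundedI) auto
qed

lemma wave_gap_bound_Delta:
  assumes "wave_gap_bound N k r g" "k \<ge> 2"
  shows "wave_gap_bound N k r (Delta N k r)"
  unfolding wave_gap_bound_def
proof (intro allI impI)
  fix \<psi> assume col: "coloring \<psi> N r"
  then obtain w where "length w = k" "mono_wave \<psi> N w"
    using assms(1) unfolding wave_gap_bound_def by blast
  then obtain v where v: "length v = k" "mono_wave \<psi> N v" "v ! (k-1) - v ! (k-2) = delta k \<psi> N"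
    using delta_attained assms(2) by blast
  have "delta k \<psi> N \<le> Delta N k r"
    unfolding Delta_def using col by (intro Max_ge finite_deltas[OF assms]) blast
  then show "\<exists>w. length w = k \<and> mono_wave \<psi> N w \<and> w ! (k-1) - w ! (k-2) \<le> Delta N k r"
    using v by auto
qed

lemma mono_wave_recolour:
  assumes "mono_wave \<phi> N v" "N \<le> N'"
    and "\<forall>x\<in>set v. \<forall>y\<in>set v. \<phi> x = \<phi> y \<longrightarrow> \<psi> x = \<psi> y"
  shows "mono_wave \<psi> N' v"
  using assms unfolding mono_wave_def by (meson atLeastatMost_subset_iff order_refl subset_trans)

lemma wave_gap_bound_pos: "wave_gap_bound N (Suc k) r g \<Longrightarrow> r \<ge> 1 \<Longrightarrow> N \<ge> 1"
proof -
  assume bound: "wave_gap_bound N (Suc k) r g" and "r \<ge> 1"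
  then have "coloring (\<lambda>_. 0) N r"
    unfolding coloring_def by simp
  then obtain u where u: "length u = Suc k" "mono_wave (\<lambda>_. 0) N u"
    using bound unfolding wave_gap_bound_def by blast
  then have "u ! 0 \<in> set u"
    by simp
  then have "u ! 0 \<in> {1..N}"
    using u(2) unfolding mono_wave_def by blast
  then show "N \<ge> 1"
    by simp
qed

lemma mono_wave_extend_in_window:
  assumes "mono_wave \<psi> A w" "length w = k" "k \<ge> 2" "w ! (k-1) - w ! (k-2) \<le> d"
    and "x \<in> {w ! (k-1) + d..w ! (k-1) + d + B - 1}" "\<psi> x = \<psi> (w ! (k-1))"
  shows "\<exists>v. length v = Suc k \<and> mono_wave \<psi> (A + d + B - 1) v \<and> v ! k - v ! (k-1) \<le> d + B - 1"
proof -
  have "w ! (k-1) \<in> set w"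
    using assms(2,3) by simp
  moreover have "set w \<subseteq> {1..A}"
    using assms(1) unfolding mono_wave_def by blast
  ultimately have L: "1 \<le> w ! (k-1)" "w ! (k-1) \<le> A"
    by (meson atLeastAtMost_iff subsetD)+
  then have x: "w ! (k-1) + (w ! (k-1) - w ! (k-2)) \<le> x" "x \<le> A + d + B - 1"
    using assms(4,5) by auto
  have "B \<ge> 1"
    using assms(5) L(1) by auto
  then have "mono_wave \<psi> (A + d + B - 1) w"
    using mono_wave_mono[OF assms(1)] by simp
  then have "mono_wave \<psi> (A + d + B - 1) (w @ [x])"
    using mono_wave_snoc[OF _ assms(2,3) x] assms(6) by blast
  moreover have "(w @ [x]) ! k - (w @ [x]) ! (k-1) \<le> d + B - 1"
    using assms(2,3,5) by (auto simp: nth_append)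
  ultimately show ?thesis
    using assms(2) by (intro exI[of _ "w @ [x]"]) simp
qed

lemma wave_in_window_avoiding_colour:
  assumes "k \<ge> 2" and bound: "wave_gap_bound B k r g"
    and col: "coloring \<psi> N (Suc r)" and "c \<le> r" and "s + B \<le> N"
    and avoid: "\<forall>x\<in>{s+1..s+B}. \<psi> x \<noteq> c"
  shows "\<exists>v. length v = k \<and> mono_wave \<psi> N v \<and> v ! (k-1) - v ! (k-2) \<le> g"
proof -
  define \<phi> where "\<phi> x = (if \<psi> x < c then \<psi> x else \<psi> x - 1)" for x
  have "\<phi> (x + s) < r" if "x \<in> {1..B}" for x
  proof -
    have "\<psi> (x + s) < Suc r"
      using col that assms(5) unfolding coloring_def by auto
    moreover have "\<psi> (x + s) \<noteq> c"
      using avoid that by auto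
    ultimately show ?thesis
      using assms(4) unfolding \<phi>_def by auto
  qed
  then have "coloring (\<lambda>x. \<phi> (x + s)) B r"
    unfolding coloring_def by blast
  then obtain u where u: "length u = k" "mono_wave (\<lambda>x. \<phi> (x + s)) B u"
      "u ! (k-1) - u ! (k-2) \<le> g"
    using bound unfolding wave_gap_bound_def by blast
  define v where "v = map (\<lambda>x. x + s) u"
  have "set u \<subseteq> {1..B}"
    using u(2) unfolding mono_wave_def by blast
  then have "set v \<subseteq> {s+1..s+B}"
    unfolding v_def by force
  then have avoid_v: "\<psi> x \<noteq> c" if "x \<in> set v" for x
    using avoid that by blast
  have "\<forall>x\<in>set v. \<forall>y\<in>set v. \<phi> x = \<phi> y \<longrightarrow> \<psi> x = \<psi> y"
  proof (intro ballI impI)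
    fix x y assume "x \<in> set v" "y \<in> set v" "\<phi> x = \<phi> y"
    moreover have "\<psi> x \<noteq> c" "\<psi> y \<noteq> c"
      using avoid_v calculation(1,2) by blast+
    ultimately show "\<psi> x = \<psi> y"
      unfolding \<phi>_def by (auto split: if_split_asm)
  qed
  moreover have "mono_wave \<phi> (s + B) v"
    using mono_wave_shift[OF u(2)] unfolding v_def .
  ultimately have "mono_wave \<psi> N v"
    using mono_wave_recolour assms(5) by blast
  moreover have "v ! (k-1) - v ! (k-2) \<le> g"
    using u(1,3) assms(1) by (simp add: v_def)
  moreover have "length v = k"
    using u(1) by (simp add: v_def)
  ultimately show ?thesis
    by blast
qed

lemma wave_gap_bound_step:
  assumes "k \<ge> 2" "r \<ge> 1"
    and short: "wave_gap_bound A k (Suc r) d"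
    and fewer_colours: "wave_gap_bound B (Suc k) r g"
  shows "wave_gap_bound (A + d + B - 1) (Suc k) (Suc r) (max (d + B - 1) g)"
  unfolding wave_gap_bound_def
proof (intro allI impI)
  fix \<psi>
  let ?N = "A + d + B - 1"
  assume col: "coloring \<psi> ?N (Suc r)"
  have "B \<ge> 1"
    using wave_gap_bound_pos[OF fewer_colours assms(2)] .
  then have "coloring \<psi> A (Suc r)"
    using col unfolding coloring_def by auto
  then obtain w where w: "length w = k" "mono_wave \<psi> A w" "w ! (k-1) - w ! (k-2) \<le> d"
    using short unfolding wave_gap_bound_def by blast
  define L where "L = w ! (k-1)"
  have "w ! (k-2) < L"
    using w(1,2) assms(1) unfolding mono_wave_def ascending_wave_def L_def
    by (simp add: sorted_wrt_nth_less)
  then have "d \<ge> 1"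
    using w(3) unfolding L_def by linarith
  have "L \<in> set w"
    using w(1) assms(1) unfolding L_def by simp
  moreover have "set w \<subseteq> {1..A}"
    using w(2) unfolding mono_wave_def by blast
  ultimately have L: "1 \<le> L" "L \<le> A"
    by auto
  then have "\<psi> L < Suc r"
    using col \<open>B \<ge> 1\<close> unfolding coloring_def by auto
  consider (hit) x where "x \<in> {L+d..L+d+B-1}" "\<psi> x = \<psi> L"
    | (miss) "\<forall>x\<in>{L+d..L+d+B-1}. \<psi> x \<noteq> \<psi> L"
    by blast
  then show "\<exists>v. length v = Suc k \<and> mono_wave \<psi> ?N v \<and>
      v ! (Suc k - 1) - v ! (Suc k - 2) \<le> max (d + B - 1) g"
  proof cases
    case hit
    then obtain v where "length v = Suc k" "mono_wave \<psi> ?N v" "v ! k - v ! (k-1) \<le> d + B - 1"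
      using mono_wave_extend_in_window[OF w(2,1) assms(1) w(3)] unfolding L_def by blast
    then show ?thesis
      by (intro exI[of _ v]) simp
  next
    case miss
    have window: "{L+d-1+1..L+d-1+B} = {L+d..L+d+B-1}"
      using \<open>d \<ge> 1\<close> \<open>B \<ge> 1\<close> by auto
    have avoid: "\<forall>x\<in>{L+d-1+1..L+d-1+B}. \<psi> x \<noteq> \<psi> L"
      unfolding window using miss .
    have "L + d - 1 + B \<le> ?N" "\<psi> L \<le> r" "Suc k \<ge> 2"
      using L \<open>d \<ge> 1\<close> \<open>\<psi> L < Suc r\<close> assms(1) by auto
    from wave_in_window_avoiding_colour[OF this(3) fewer_colours col this(2,1) avoid]
    obtain v where "length v = Suc k" "mono_wave \<psi> ?N v" "v ! k - v ! (k-1) \<le> g"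
      by auto
    then show ?thesis
      by (intro exI[of _ v]) simp
  qed
qed

lemma wave_gap_bound_Mkr_Suc_Suc:
  assumes "k \<ge> 2" "r \<ge> 1"
    and "wave_gap_bound (Mkr k (Suc r)) k (Suc r) d"
    and "wave_gap_bound (Mkr (Suc k) r) (Suc k) r g"
  shows "wave_gap_bound (Mkr (Suc k) (Suc r)) (Suc k) (Suc r)
           (max (Delta (Mkr k (Suc r)) k (Suc r) + Mkr (Suc k) r - 1) g)"
  using wave_gap_bound_step[OF assms(1,2) wave_gap_bound_Delta[OF assms(3,1)] assms(4)]
  by (simp add: Mkr_Suc_Suc[OF assms(1,2)])

lemma binomial_le_Suc_Suc: "n choose k \<le> Suc n choose Suc k"
  by simp

lemma Mkr_binomial_bounds_Suc:
  assumes "r \<ge> 1"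
    and IH: "\<And>k. k \<ge> 2 \<Longrightarrow> wave_gap_bound (Mkr k r) k r ((k + c) choose (2*r - 2)) \<and>
                              Mkr k r \<le> (k + c + 1) choose (2*r - 1)"
    and "k \<ge> 2"
  shows "wave_gap_bound (Mkr k (Suc r)) k (Suc r) ((k + c + 2*r) choose (2*r)) \<and>
         Mkr k (Suc r) \<le> (k + c + 2*r + 1) choose (2*r + 1)"
  using \<open>k \<ge> 2\<close>
proof (induction k rule: nat_induct_at_least)
  case base
  have "Suc r \<le> (2 + c + 2*r) choose (2*r)"
    using upper_le_binomial[of "2*r" "2 + c + 2*r"] assms(1) by simp
  moreover have "Suc r + 1 \<le> (2 + c + 2*r + 1) choose (2*r + 1)"
    using upper_le_binomial[of "2*r + 1" "2 + c + 2*r + 1"] by simp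
  ultimately show ?case
    using wave_gap_bound_mono[OF wave_gap_bound_two] Mkr_two[of "Suc r"] by simp
next
  case (Suc k)
  let ?D = "Delta (Mkr k (Suc r)) k (Suc r)" and ?B = "Mkr (Suc k) r" and ?n = "k + c + 2*r"
  have gap_k: "wave_gap_bound (Mkr k (Suc r)) k (Suc r) (?n choose (2*r))"
    and M_k: "Mkr k (Suc r) \<le> (?n + 1) choose (2*r + 1)"
    using Suc.IH by auto
  have gap_B: "wave_gap_bound ?B (Suc k) r ((Suc k + c) choose (2*r - 2))"
    and B_le: "?B \<le> (Suc k + c + 1) choose (2*r - 1)"
    using IH[of "Suc k"] Suc.hyps by auto
  have "?D \<le> ?n choose (2*r)"
    using Delta_le[OF gap_k] Suc.hyps by simp
  moreover have "?B \<le> ?n choose (2*r - 1)"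
    using B_le binomial_right_mono[of "Suc k + c + 1" ?n "2*r - 1"] assms(1) by linarith
  moreover have "(?n choose (2*r - 1)) + (?n choose (2*r)) = Suc ?n choose (2*r)"
    using binomial_Suc_Suc[of ?n "2*r - 1"] assms(1) by simp
  ultimately have D_B: "?D + ?B \<le> Suc ?n choose (2*r)"
    by linarith
  have two_r: "Suc (Suc (2*r - 2)) = 2*r"
    using assms(1) by simp
  have "(Suc k + c) choose (2*r - 2) \<le> Suc (Suc k + c) choose Suc (2*r - 2)"
    by (rule binomial_le_Suc_Suc)
  also have "\<dots> \<le> Suc (Suc (Suc k + c)) choose (2*r)"
    using binomial_le_Suc_Suc[of "Suc (Suc k + c)" "Suc (2*r - 2)"] by (simp only: two_r)
  also have "\<dots> \<le> Suc ?n choose (2*r)"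
    using assms(1) by (intro binomial_right_mono) simp
  finally have "wave_gap_bound (Mkr (Suc k) (Suc r)) (Suc k) (Suc r) (Suc ?n choose (2*r))"
    using wave_gap_bound_mono[OF wave_gap_bound_Mkr_Suc_Suc[OF Suc.hyps assms(1) gap_k gap_B]] D_B
    by simp
  moreover have "Mkr (Suc k) (Suc r) \<le> (Suc ?n + 1) choose (2*r + 1)"
    using Mkr_Suc_Suc[OF Suc.hyps assms(1)] M_k D_B by simp
  ultimately show ?case
    by simp
qed

lemma Mkr_binomial_bounds:
  assumes "r \<ge> 1"
  shows "\<exists>c. \<forall>k\<ge>2. wave_gap_bound (Mkr k r) k r ((k + c) choose (2*r - 2)) \<and>
                   Mkr k r \<le> (k + c + 1) choose (2*r - 1)"
  using assms
proof (induction r rule: nat_induct_at_least)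
  case base
  have "wave_gap_bound (Mkr k 1) k 1 1 \<and> Mkr k 1 \<le> k + 1" if "k \<ge> 2" for k
    using wave_gap_bound_one_colour[of k k] Mkr_one[of k] that by simp
  then show ?case
    by (intro exI[of _ 0]) simp
next
  case (Suc r)
  then obtain c where "\<forall>k\<ge>2. wave_gap_bound (Mkr k r) k r ((k + c) choose (2*r - 2)) \<and>
                              Mkr k r \<le> (k + c + 1) choose (2*r - 1)"
    by blast
  then show ?case
    using Mkr_binomial_bounds_Suc[OF Suc.hyps] by (intro exI[of _ "c + 2*r"]) (simp add: add.assoc)
qed

lemma binomial_le_leading_term_plus_poly:
  "\<exists>p :: real poly. degree p \<le> n - 1 \<and>
     (\<forall>m::nat. real ((m + a) choose n) \<le> real m ^ n / fact n + poly p (real m))"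
proof -
  define p :: "real poly" where "p = smult (1 / fact n) ([:real a, 1:] ^ n - monom 1 n)"
  have "coeff ([:real a, 1:] ^ n - monom 1 n) i = 0" if "i > n - 1" for i
  proof (cases "i = n")
    case True
    then show ?thesis
      by (simp add: coeff_linear_power)
  next
    case False
    then have "i > degree ([:real a, 1:] ^ n)"
      using that by (simp add: degree_linear_power)
    then show ?thesis
      using False by (simp add: coeff_eq_0)
  qed
  then have "degree p \<le> n - 1"
    unfolding p_def by (intro degree_le) simp
  moreover have "real ((m + a) choose n) \<le> real m ^ n / fact n + poly p (real m)" for m
  proof -
    have "real ((m + a) choose n) * fact n \<le> real (m + a) ^ n"
      using binomial_fact_pow[of "m + a" n] by (metis of_nat_fact of_nat_le_iff of_nat_mult of_nat_power)
    then have "real ((m + a) choose n) \<le> real (m + a) ^ n / fact n"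
      by (simp add: field_simps)
    also have "\<dots> = real m ^ n / fact n + poly p (real m)"
      unfolding p_def by (simp add: poly_monom field_simps)
    finally show ?thesis .
  qed
  ultimately show ?thesis
    by blast
qed

theorem lemma1p4:
  fixes r :: nat
  assumes "r \<ge> 1"
  shows "\<exists>p :: real poly. degree p \<le> 2*r - 2 \<and>
           (\<forall>k::nat. k \<ge> 3 \<longrightarrow>
              real (Mkr k r) \<le> real k ^ (2*r - 1) / fact (2*r - 1) + poly p (real k))"
proof -
  obtain c where bounds: "\<forall>k\<ge>2. Mkr k r \<le> (k + (c + 1)) choose (2*r - 1)"
    using Mkr_binomial_bounds[OF assms] by (auto simp: add.assoc)
  obtain p :: "real poly" where "degree p \<le> 2*r - 1 - 1"
    and p: "\<forall>m::nat. real ((m + (c + 1)) choose (2*r - 1))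
                      \<le> real m ^ (2*r - 1) / fact (2*r - 1) + poly p (real m)"
    using binomial_le_leading_term_plus_poly by blast
  moreover have "real (Mkr k r) \<le> real k ^ (2*r - 1) / fact (2*r - 1) + poly p (real k)"
    if "k \<ge> 3" for k
  proof -
    have "real (Mkr k r) \<le> real ((k + (c + 1)) choose (2*r - 1))"
      using bounds that by simp
    also have "\<dots> \<le> real k ^ (2*r - 1) / fact (2*r - 1) + poly p (real k)"
      using p by blast
    finally show ?thesis .
  qed
  ultimately show ?thesis
    by (intro exI[of _ p]) simp
qed

end
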